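(* For every integer $T=3k+1$ with $k\ge 2$ and every $\sigma\in\mathfrak S_3$, the vector $\sigma c$ with $c=[2,-1,-1,-1,2,2]$ defines a facet of $P^T$.
   Context: For an integer $T\ge 2$, let $\Omega_T$ be the set of words $w=s_1s_2\cdots s_T$ over $\{1,2,3\}$ with $s_l\neq s_{l+1}$ for $l=1,\dots,T-1$. For $w\in\Omega_T$ and an ordered pair $ij$, $i\neq j$, let $x_{ij}(w)$ be the number of indices $1\le l\le T-1$ with $s_ls_{l+1}=ij$. Vectors of $\mathbb R^6$ are indexed in the order $[x_{12},x_{13},x_{21},x_{23},x_{31},x_{32}]$. Let $a_w=[x_{12}(w),\dots,x_{32}(w)]$ and $P^T=\mathrm{conv}\{a_w:w\in\Omega_T\}$. $\mathfrak S_3$ acts on $\mathbb R^6$ by $(\sigma c)_{ij}=c_{\sigma(i)\sigma(j)}$. A vector $c$ defines a facet of $P^T$ if $c\cdot a_w\ge0$ for all $w\in\Omega_T$ and $\{x\in P^T: c\cdot x=0\}$ is a facet of $P^T$. *)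

theory Defs
  imports "HOL-Analysis.Analysis"
begin

text \<open>Words of length T over {1,2,3} with no two consecutive letters equal
  (positions are 0-based: the list index l corresponds to s_(l+1)).\<close>
definition Omega :: "nat \<Rightarrow> nat list set" where
  "Omega T = {w. length w = T \<and> set w \<subseteq> {1,2,3} \<and>
                 (\<forall>l. l + 1 < T \<longrightarrow> w ! l \<noteq> w ! (l + 1))}"

definition xcount :: "nat \<Rightarrow> nat \<Rightarrow> nat list \<Rightarrow> nat" where
  "xcount i j w = card {l. l + 1 < length w \<and> w ! l = i \<and> w ! (l + 1) = j}"

definition pair_vec :: "(nat \<Rightarrow> nat \<Rightarrow> real) \<Rightarrow> real^6" where
  "pair_vec f = vector [f 1 2, f 1 3, f 2 1, f 2 3, f 3 1, f 3 2]"

definition coord :: "real^6 \<Rightarrow> nat \<Rightarrow> nat \<Rightarrow> real" where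
  "coord v i j =
     (if (i, j) = (1, 2) then v $ 1 else
      if (i, j) = (1, 3) then v $ 2 else
      if (i, j) = (2, 1) then v $ 3 else
      if (i, j) = (2, 3) then v $ 4 else
      if (i, j) = (3, 1) then v $ 5 else
      if (i, j) = (3, 2) then v $ 6 else 0)"

definition perm_act :: "(nat \<Rightarrow> nat) \<Rightarrow> real^6 \<Rightarrow> real^6" where
  "perm_act \<sigma> c = pair_vec (\<lambda>i j. coord c (\<sigma> i) (\<sigma> j))"

definition avec :: "nat list \<Rightarrow> real^6" where
  "avec w = pair_vec (\<lambda>i j. real (xcount i j w))"

definition PT :: "nat \<Rightarrow> (real^6) set" where
  "PT T = convex hull (avec ` Omega T)"

definition defines_facet :: "real^6 \<Rightarrow> nat \<Rightarrow> bool" where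
  "defines_facet c T \<longleftrightarrow>
     (\<forall>w \<in> Omega T. c \<bullet> avec w \<ge> 0) \<and>
     ({x \<in> PT T. c \<bullet> x = 0} facet_of PT T)"

end

theory Submission
  imports Defs
begin

text \<open>
  For a word \<open>w\<close>, \<open>c \<bullet> a\<^sub>w\<close> is the sum of the weights \<open>c\<^sub>i\<^sub>j\<close> over the consecutive
  letter pairs of \<open>w\<close>. For \<open>c = [2,-1,-1,-1,2,2]\<close> every weight is \<open>-1 mod 3\<close>, so the sum is
  \<open>-(T - 1) = -3k \<equiv> 0 mod 3\<close>; and every weight dominates the increase of the potential
  \<open>\<phi>(1) = 1, \<phi>(2) = 2, \<phi>(3) = 0\<close> along its pair, so the sum is at least \<open>-2\<close>. Hence it is
  nonnegative. The polytope lies in the hyperplane of coordinate sum \<open>T - 1\<close>, so it has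
  dimension at most 5, and five affinely independent vertices with \<open>c \<bullet> a\<^sub>w = 0\<close> together
  with one with \<open>c \<bullet> a\<^sub>w > 0\<close> show that the face cut out by \<open>c\<close> is a facet. Relabelling the
  letters by \<open>\<sigma>\<close> permutes the vertices and acts orthogonally on \<open>\<real>\<^sup>6\<close>, so it maps facets to
  facets.
\<close>

lemma exhaust_6:
  fixes x :: 6
  shows "x = 1 \<or> x = 2 \<or> x = 3 \<or> x = 4 \<or> x = 5 \<or> x = 6"
proof (induct x)
  case (of_int z)
  then have "z = 0 \<or> z = 1 \<or> z = 2 \<or> z = 3 \<or> z = 4 \<or> z = 5" by auto
  then show ?case by (elim disjE; simp)
qed

lemma UNIV_6: "UNIV = {1, 2, 3, 4, 5, 6::6}"
  using exhaust_6 by blast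

lemma vector_6_nth [simp]:
  "(vector [x1,x2,x3,x4,x5,x6] :: 'a::zero^6) $ 1 = x1"
  "(vector [x1,x2,x3,x4,x5,x6] :: 'a::zero^6) $ 2 = x2"
  "(vector [x1,x2,x3,x4,x5,x6] :: 'a::zero^6) $ 3 = x3"
  "(vector [x1,x2,x3,x4,x5,x6] :: 'a::zero^6) $ 4 = x4"
  "(vector [x1,x2,x3,x4,x5,x6] :: 'a::zero^6) $ 5 = x5"
  "(vector [x1,x2,x3,x4,x5,x6] :: 'a::zero^6) $ 6 = x6"
  unfolding vector_def by simp_all

lemma vec6_eq_iff:
  "(x::real^6) = y \<longleftrightarrow>
     x$1 = y$1 \<and> x$2 = y$2 \<and> x$3 = y$3 \<and> x$4 = y$4 \<and> x$5 = y$5 \<and> x$6 = y$6"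
proof -
  have "(\<forall>i::6. P i) \<longleftrightarrow> P 1 \<and> P 2 \<and> P 3 \<and> P 4 \<and> P 5 \<and> P 6" for P
    using exhaust_6 by metis
  then show ?thesis unfolding vec_eq_iff .
qed

lemma inner_vec6:
  "(x::real^6) \<bullet> y = x$1*y$1 + x$2*y$2 + x$3*y$3 + x$4*y$4 + x$5*y$5 + x$6*y$6"
  unfolding inner_vec_def UNIV_6 by simp

lemma pair_vec_nth [simp]:
  "pair_vec f $ 1 = f 1 2" "pair_vec f $ 2 = f 1 3" "pair_vec f $ 3 = f 2 1"
  "pair_vec f $ 4 = f 2 3" "pair_vec f $ 5 = f 3 1" "pair_vec f $ 6 = f 3 2"
  unfolding pair_vec_def by simp_all

definition offdiag :: "(nat \<times> nat) set" where
  "offdiag = {(i, j). i \<in> {1,2,3} \<and> j \<in> {1,2,3} \<and> i \<noteq> j}"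

lemma offdiag_eq: "offdiag = {(1,2), (1,3), (2,1), (2,3), (3,1), (3,2)}"
  unfolding offdiag_def by auto

lemma coord_pair_vec: "(a, b) \<in> offdiag \<Longrightarrow> coord (pair_vec f) a b = f a b"
  by (auto simp: offdiag_eq coord_def)

lemma inner_eq_sum_offdiag: "v \<bullet> u = (\<Sum>(i, j)\<in>offdiag. coord v i j * coord u i j)"
  by (simp add: offdiag_eq inner_vec6 coord_def)

subsection \<open>Transition counts as sums along a word\<close>

definition admissible :: "nat list \<Rightarrow> bool" where
  "admissible w \<longleftrightarrow> set w \<subseteq> {1,2,3} \<and> distinct_adj w"

lemma Omega_iff: "w \<in> Omega T \<longleftrightarrow> length w = T \<and> admissible w"
  unfolding Omega_def admissible_def distinct_adj_conv_nth by auto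

lemma admissible_Cons_Cons:
  "admissible (a # b # w) \<longleftrightarrow> (a, b) \<in> offdiag \<and> admissible (b # w)"
  unfolding admissible_def offdiag_def by auto

lemma admissible_map_permutes:
  assumes "\<sigma> permutes {1,2,3}" "admissible w"
  shows "admissible (map \<sigma> w)"
  using assms permutes_in_image[OF assms(1)] inj_on_subset[OF permutes_inj[OF assms(1)]]
  unfolding admissible_def by (auto intro!: distinct_adj_mapI)

lemma map_permutes_Omega:
  assumes "\<sigma> permutes {1,2,3}"
  shows "map \<sigma> ` Omega T = Omega T"
proof -
  have "map \<sigma> ` Omega T \<subseteq> Omega T" if "\<sigma> permutes {1,2,3}" for \<sigma>
    using that admissible_map_permutes by (auto simp: Omega_iff)
  moreover have "w = map \<sigma> (map (inv \<sigma>) w)" for w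
    by (simp add: permutes_inverses(1)[OF assms] map_idI)
  ultimately show ?thesis
    using assms permutes_inv[OF assms] by blast
qed

lemma xcount_Cons_Cons:
  "xcount i j (a # b # w) = (if a = i \<and> b = j then 1 else 0) + xcount i j (b # w)"
proof -
  define A where "A = {l. l + 1 < length (b # w) \<and> (b # w) ! l = i \<and> (b # w) ! (l + 1) = j}"
  have eq: "{l. l + 1 < length (a # b # w) \<and> (a # b # w) ! l = i \<and> (a # b # w) ! (l + 1) = j}
        = (if a = i \<and> b = j then {0} else {}) \<union> Suc ` A" (is "?L = ?R")
  proof (rule set_eqI)
    fix l show "l \<in> ?L \<longleftrightarrow> l \<in> ?R"
      by (cases l) (auto simp: A_def)
  qed
  have "finite A" unfolding A_def by (rule finite_subset[of _ "{..<length (b # w)}"]) auto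
  then have "card ?R = (if a = i \<and> b = j then 1 else 0) + card A"
    by (auto simp: card_image)
  then show ?thesis unfolding xcount_def eq A_def by simp
qed

definition unit_pair :: "nat \<Rightarrow> nat \<Rightarrow> real^6" where
  "unit_pair a b = pair_vec (\<lambda>i j. if (i, j) = (a, b) then 1 else 0)"

lemma inner_unit_pair: "(a, b) \<in> offdiag \<Longrightarrow> v \<bullet> unit_pair a b = coord v a b"
  by (auto simp: offdiag_eq inner_vec6 unit_pair_def coord_def)

lemma avec_Nil_singleton [simp]: "avec [] = 0" "avec [a] = 0"
  by (simp_all add: avec_def xcount_def vec6_eq_iff)

lemma avec_Cons_Cons: "avec (a # b # w) = unit_pair a b + avec (b # w)"
  by (simp add: avec_def unit_pair_def vec6_eq_iff xcount_Cons_Cons)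

fun walk_sum :: "(nat \<Rightarrow> nat \<Rightarrow> real) \<Rightarrow> nat list \<Rightarrow> real" where
  "walk_sum f (a # b # w) = f a b + walk_sum f (b # w)"
| "walk_sum f _ = 0"

lemma inner_avec_eq_walk_sum: "admissible w \<Longrightarrow> v \<bullet> avec w = walk_sum (coord v) w"
proof (induction w rule: induct_list012)
  case (3 a b w)
  then show ?case
    by (simp add: admissible_Cons_Cons avec_Cons_Cons inner_add_right inner_unit_pair)
qed simp_all

subsection \<open>Invariance under relabelling the letters\<close>

lemma offdiag_permutes_iff:
  assumes "\<sigma> permutes {1,2,3}"
  shows "(\<sigma> a, \<sigma> b) \<in> offdiag \<longleftrightarrow> (a, b) \<in> offdiag"
  using permutes_in_image[OF assms] permutes_inj[OF assms]
  unfolding offdiag_def by (auto dest: injD)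

lemma coord_perm_act:
  "(a, b) \<in> offdiag \<Longrightarrow> coord (perm_act \<sigma> c) a b = coord c (\<sigma> a) (\<sigma> b)"
  unfolding perm_act_def by (rule coord_pair_vec)

lemma inner_perm_act:
  assumes "\<sigma> permutes {1,2,3}"
  shows "perm_act \<sigma> c \<bullet> perm_act \<sigma> x = c \<bullet> x"
  unfolding inner_eq_sum_offdiag
proof (rule sum.reindex_bij_witness[where j = "map_prod \<sigma> \<sigma>" and i = "map_prod (inv \<sigma>) (inv \<sigma>)"])
  have inv: "inv \<sigma> permutes {1,2,3}" using assms by (rule permutes_inv)
  show "map_prod (inv \<sigma>) (inv \<sigma>) (map_prod \<sigma> \<sigma> p) = p" for p
    by (cases p) (simp add: permutes_inverses[OF assms])
  show "map_prod \<sigma> \<sigma> (map_prod (inv \<sigma>) (inv \<sigma>) p) = p" for p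
    by (cases p) (simp add: permutes_inverses[OF assms])
  show "map_prod \<sigma> \<sigma> p \<in> offdiag" "map_prod (inv \<sigma>) (inv \<sigma>) p \<in> offdiag"
    if "p \<in> offdiag" for p
    using that offdiag_permutes_iff[OF assms] offdiag_permutes_iff[OF inv] by (cases p; simp)+
  show "(case map_prod \<sigma> \<sigma> p of (i, j) \<Rightarrow> coord c i j * coord x i j)
        = (case p of (i, j) \<Rightarrow> coord (perm_act \<sigma> c) i j * coord (perm_act \<sigma> x) i j)"
    if "p \<in> offdiag" for p
    using that by (cases p) (simp add: coord_perm_act)
qed

lemma linear_perm_act: "linear (perm_act \<sigma>)"
  by (rule linearI) (simp_all add: perm_act_def vec6_eq_iff coord_def)

lemma inj_perm_act:
  assumes "\<sigma> permutes {1,2,3}"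
  shows "inj (perm_act \<sigma>)"
  unfolding linear_injective_0[OF linear_perm_act]
  using inner_perm_act[OF assms, of x x for x] by (metis inner_eq_zero_iff inner_zero_left)

lemma pair_vec_cong: "(\<And>i j. (i, j) \<in> offdiag \<Longrightarrow> f i j = g i j) \<Longrightarrow> pair_vec f = pair_vec g"
  by (simp add: pair_vec_def offdiag_eq)

lemma avec_map_inv:
  assumes "\<sigma> permutes {1,2,3}"
  shows "avec (map (inv \<sigma>) w) = perm_act \<sigma> (avec w)"
proof -
  have "xcount i j (map (inv \<sigma>) w) = xcount (\<sigma> i) (\<sigma> j) w" for i j
    unfolding xcount_def
    by (rule arg_cong[where f = card]) (auto simp: permutes_inverses[OF assms] permutes_inv_eq[OF assms])
  moreover have "coord (avec w) (\<sigma> i) (\<sigma> j) = xcount (\<sigma> i) (\<sigma> j) w" if "(i, j) \<in> offdiag" for i j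
    using that offdiag_permutes_iff[OF assms] unfolding avec_def by (simp add: coord_pair_vec)
  ultimately show ?thesis
    unfolding perm_act_def by (auto simp: avec_def intro: pair_vec_cong)
qed

lemma perm_act_PT:
  assumes "\<sigma> permutes {1,2,3}"
  shows "perm_act \<sigma> ` PT T = PT T"
proof -
  have "perm_act \<sigma> ` avec ` Omega T = avec ` map (inv \<sigma>) ` Omega T"
    by (auto simp: image_image avec_map_inv[OF assms])
  also have "\<dots> = avec ` Omega T"
    using map_permutes_Omega[OF permutes_inv[OF assms]] by simp
  finally show ?thesis
    unfolding PT_def by (simp add: convex_hull_linear_image[OF linear_perm_act])
qed

lemma facet_of_linear_image:
  assumes "linear f" "inj f"
  shows "(f ` F facet_of f ` S) \<longleftrightarrow> F facet_of S"
  using assms by (simp add: facet_of_def face_of_linear_image)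

lemma defines_facet_perm_act:
  assumes \<sigma>: "\<sigma> permutes {1,2,3}" and c: "defines_facet c T"
  shows "defines_facet (perm_act \<sigma> c) T"
proof -
  let ?L = "perm_act \<sigma>" and ?F = "{y \<in> PT T. c \<bullet> y = 0}"
  have "?L c \<bullet> avec w \<ge> 0" if "w \<in> Omega T" for w
  proof -
    have "map (inv \<sigma>) (map \<sigma> w) = w"
      by (simp add: permutes_inverses(2)[OF \<sigma>] map_idI)
    then have "avec w = ?L (avec (map \<sigma> w))"
      using avec_map_inv[OF \<sigma>, of "map \<sigma> w"] by simp
    moreover have "map \<sigma> w \<in> Omega T" using that map_permutes_Omega[OF \<sigma>] by blast
    ultimately show ?thesis using c inner_perm_act[OF \<sigma>] unfolding defines_facet_def by simp
  qed
  moreover have "{x \<in> PT T. ?L c \<bullet> x = 0} = ?L ` ?F"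
  proof -
    have "{x \<in> ?L ` PT T. ?L c \<bullet> x = 0} = ?L ` {y \<in> PT T. ?L c \<bullet> ?L y = 0}"
      by blast
    then show ?thesis by (simp only: perm_act_PT[OF \<sigma>] inner_perm_act[OF \<sigma>])
  qed
  moreover have "?L ` ?F facet_of ?L ` PT T"
    using c unfolding defines_facet_def
    by (simp only: facet_of_linear_image[OF linear_perm_act inj_perm_act[OF \<sigma>]])
  ultimately show ?thesis
    unfolding defines_facet_def perm_act_PT[OF \<sigma>] by simp
qed

subsection \<open>Validity of the inequality\<close>

lemma walk_sum_const:
  assumes "\<And>a b. (a, b) \<in> offdiag \<Longrightarrow> f a b = r"
  shows "admissible w \<Longrightarrow> walk_sum f w = r * real (length w - 1)"
proof (induction w rule: induct_list012)
  case (3 a b w)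
  then show ?case using assms by (simp add: admissible_Cons_Cons algebra_simps)
qed simp_all

lemma walk_sum_ge_potential_difference:
  assumes "\<And>a b. (a, b) \<in> offdiag \<Longrightarrow> \<phi> b - \<phi> a \<le> f a b"
  shows "admissible w \<Longrightarrow> w \<noteq> [] \<Longrightarrow> \<phi> (last w) - \<phi> (hd w) \<le> walk_sum f w"
proof (induction w rule: induct_list012)
  case (3 a b w)
  then have "\<phi> b - \<phi> a \<le> f a b" and "\<phi> (last (b # w)) - \<phi> b \<le> walk_sum f (b # w)"
    using assms by (auto simp: admissible_Cons_Cons)
  then show ?case by simp
qed simp_all

lemma walk_sum_mod_3:
  fixes f :: "nat \<Rightarrow> nat \<Rightarrow> real"
  assumes "\<And>a b. (a, b) \<in> offdiag \<Longrightarrow> \<exists>n::int. f a b = 3 * of_int n - 1"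
  shows "admissible w \<Longrightarrow> \<exists>n::int. walk_sum f w = 3 * of_int n - real (length w - 1)"
proof (induction w rule: induct_list012)
  case (3 a b w)
  then have "(a, b) \<in> offdiag" and "admissible (b # w)"
    by (auto simp: admissible_Cons_Cons)
  then obtain n n' :: int where "f a b = 3 * of_int n - 1"
    and "walk_sum f (b # w) = 3 * of_int n' - real (length (b # w) - 1)"
    using assms 3 by blast
  then have "walk_sum f (a # b # w) = 3 * of_int (n + n') - real (length (a # b # w) - 1)"
    by simp
  then show ?case by blast
qed simp_all

definition facet_normal :: "real^6" where
  "facet_normal = vector [2, -1, -1, -1, 2, 2]"

lemma walk_sum_facet_normal_nonneg:
  assumes w: "admissible w" and len: "length w = 3 * k + 1"
  shows "walk_sum (coord facet_normal) w \<ge> 0"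
proof -
  define \<phi> :: "nat \<Rightarrow> real" where "\<phi> a = (if a = 1 then 1 else if a = 2 then 2 else 0)" for a
  have step: "\<phi> b - \<phi> a \<le> coord facet_normal a b" if "(a, b) \<in> offdiag" for a b
    using that by (auto simp: offdiag_eq \<phi>_def coord_def facet_normal_def)
  moreover have "w \<noteq> []" using len by auto
  ultimately have "\<phi> (last w) - \<phi> (hd w) \<le> walk_sum (coord facet_normal) w"
    using walk_sum_ge_potential_difference[of \<phi> "coord facet_normal"] w by blast
  then have ge: "-2 \<le> walk_sum (coord facet_normal) w"
    by (simp add: \<phi>_def split: if_splits)
  have "\<exists>n::int. coord facet_normal a b = 3 * of_int n - 1" if "(a, b) \<in> offdiag" for a b
  proof -
    have "coord facet_normal a b = 3 * of_int 1 - 1 \<or> coord facet_normal a b = 3 * of_int 0 - 1"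
      using that by (auto simp: offdiag_eq coord_def facet_normal_def)
    then show ?thesis by blast
  qed
  then obtain n :: int where "walk_sum (coord facet_normal) w = 3 * of_int n - real (length w - 1)"
    using walk_sum_mod_3 w by blast
  then have n: "walk_sum (coord facet_normal) w = 3 * real_of_int n - 3 * real k"
    using len by simp
  with ge have "real_of_int (int k) < real_of_int (n + 1)" by simp
  then have "int k \<le> n" by linarith
  with n show ?thesis by simp
qed

subsection \<open>Dimension count\<close>

lemma facet_of_supporting_hyperplane:
  fixes P :: "'a::euclidean_space set"
  assumes "convex P" and "\<And>x. x \<in> P \<Longrightarrow> c \<bullet> x \<ge> 0" and "p \<in> P" "c \<bullet> p \<noteq> 0"
    and "0 \<le> d" "aff_dim P \<le> d + 1" "d \<le> aff_dim {x \<in> P. c \<bullet> x = 0}"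
  shows "{x \<in> P. c \<bullet> x = 0} facet_of P"
proof -
  let ?F = "{x \<in> P. c \<bullet> x = 0}"
  have "P \<inter> {x. c \<bullet> x = 0} = ?F" by blast
  then have face: "?F face_of P"
    using face_of_Int_supporting_hyperplane_ge[where S = P and a = c and b = 0] assms(1,2) by simp
  have "?F \<noteq> P" using assms(3,4) by blast
  with face have "aff_dim ?F < aff_dim P" by (rule face_of_aff_dim_lt[OF assms(1)])
  moreover have "?F \<noteq> {}"
  proof
    assume "?F = {}"
    then have "aff_dim ?F = -1" by (simp only: aff_dim_empty)
    then show False using assms(5,7) by simp
  qed
  ultimately show ?thesis
    unfolding facet_of_def using face assms(6,7) by simp
qed

lemma aff_dim_PT_le: "aff_dim (PT T) \<le> 5"
proof -
  \<comment> \<open>every vertex has coordinate sum \<open>T - 1\<close>\<close>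
  define ones :: "real^6" where "ones = vector [1, 1, 1, 1, 1, 1]"
  have "coord ones a b = 1" if "(a, b) \<in> offdiag" for a b
    using that by (auto simp: offdiag_eq coord_def ones_def)
  then have "ones \<bullet> avec w = real (T - 1)" if "w \<in> Omega T" for w
    using that walk_sum_const[of "coord ones" 1 w] by (simp add: Omega_iff inner_avec_eq_walk_sum)
  then have "PT T \<subseteq> {x. ones \<bullet> x = real (T - 1)}"
    unfolding PT_def by (intro hull_minimal) (auto simp: convex_hyperplane)
  moreover have "ones \<noteq> 0" by (simp add: ones_def vec6_eq_iff)
  ultimately show ?thesis
    using aff_dim_subset[of "PT T" "{x. ones \<bullet> x = real (T - 1)}"] by simp
qed

lemma not_in_span_if_coordinate_vanishes:
  fixes S :: "(real^'n) set"
  assumes "\<forall>x\<in>S. x $ i = 0" "a $ i \<noteq> 0"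
  shows "a \<notin> span S"
proof -
  have sub: "subspace {x::real^'n. x $ i = 0}" by (auto simp: subspace_def)
  have "span S \<subseteq> {x. x $ i = 0}" using assms(1) by (intro span_minimal[OF _ sub]) auto
  then show ?thesis using assms(2) by auto
qed

lemma independent_insert_not_in_span:
  fixes S :: "'a::real_vector set"
  assumes "independent S" "finite S" "a \<notin> span S"
  shows "independent (insert a S) \<and> card (insert a S) = Suc (card S)"
proof -
  have "a \<notin> S" using assms(3) span_base by blast
  then show ?thesis using assms by (simp add: independent_insert)
qed

lemma aff_dim_ge_4_triangular:
  fixes p0 p1 p2 p3 p4 :: "real^'n"
  defines "d1 \<equiv> p1 - p0" and "d2 \<equiv> p2 - p0" and "d3 \<equiv> p3 - p0" and "d4 \<equiv> p4 - p0"
  assumes "d1 $ i \<noteq> 0"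
    and "d1 $ j = 0" "d2 $ j \<noteq> 0"
    and "d1 $ k = 0" "d2 $ k = 0" "d3 $ k \<noteq> 0"
    and "d1 $ l = 0" "d2 $ l = 0" "d3 $ l = 0" "d4 $ l \<noteq> 0"
  shows "aff_dim {p0, p1, p2, p3, p4} \<ge> 4"
proof -
  have s1: "independent {d1} \<and> card {d1} = 1"
    using independent_insert_not_in_span[of "{}" d1] assms(5) by auto
  have s2: "independent {d2, d1} \<and> card {d2, d1} = 2"
    using independent_insert_not_in_span[of "{d1}" d2] s1
      not_in_span_if_coordinate_vanishes[of "{d1}" j d2] assms by auto
  have s3: "independent {d3, d2, d1} \<and> card {d3, d2, d1} = 3"
    using independent_insert_not_in_span[of "{d2, d1}" d3] s2
      not_in_span_if_coordinate_vanishes[of "{d2, d1}" k d3] assms by auto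
  have s4: "independent {d4, d3, d2, d1} \<and> card {d4, d3, d2, d1} = 4"
    using independent_insert_not_in_span[of "{d3, d2, d1}" d4] s3
      not_in_span_if_coordinate_vanishes[of "{d3, d2, d1}" l d4] assms by auto
  let ?B = "{p0, p1, p2, p3, p4}"
  have "p0 \<in> affine hull ?B" by (simp add: hull_inc)
  then have ad: "aff_dim ?B = int (dim ((+) (- p0) ` ?B))" by (rule aff_dim_eq_dim)
  have "{d4, d3, d2, d1} \<subseteq> (+) (- p0) ` ?B"
    unfolding d1_def d2_def d3_def d4_def by (auto simp: image_iff algebra_simps)
  then have "card {d4, d3, d2, d1} \<le> dim ((+) (- p0) ` ?B)"
    using s4 by (intro independent_card_le_dim) auto
  then show ?thesis using s4 ad by simp
qed

subsection \<open>Vertices on the face\<close>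

definition cycle_word :: "nat \<Rightarrow> nat \<Rightarrow> nat \<Rightarrow> nat \<Rightarrow> nat list \<Rightarrow> nat list" where
  "cycle_word a b c m q = concat (replicate m [a, b, c]) @ a # q"

lemma cycle_word_Suc: "cycle_word a b c (Suc m) q = cycle_word a b c m (b # c # a # q)"
  by (simp add: cycle_word_def replicate_append_same[symmetric])

lemma length_cycle_word [simp]: "length (cycle_word a b c m q) = 3 * m + length q + 1"
  by (induction m arbitrary: q) (auto simp: cycle_word_Suc, simp add: cycle_word_def)

lemma admissible_cycle_word:
  "admissible (a # b # c # a # q) \<Longrightarrow> admissible (cycle_word a b c m q)"
proof (induction m arbitrary: q)
  case 0
  then show ?case by (simp add: cycle_word_def admissible_Cons_Cons)
next
  case (Suc m)
  then show ?case by (simp add: cycle_word_Suc admissible_Cons_Cons)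
qed

lemma avec_cycle_word:
  "avec (cycle_word a b c m q) = real m *\<^sub>R (unit_pair a b + unit_pair b c + unit_pair c a) + avec (a # q)"
proof (induction m arbitrary: q)
  case 0
  then show ?case by (simp add: cycle_word_def)
next
  case (Suc m)
  then show ?case by (simp add: cycle_word_Suc avec_Cons_Cons algebra_simps)
qed

lemma cycle_word_in_Omega:
  "admissible (a # b # c # a # q) \<Longrightarrow> T = 3 * m + length q + 1 \<Longrightarrow> cycle_word a b c m q \<in> Omega T"
  using admissible_cycle_word by (simp add: Omega_iff)

lemma aff_dim_facet_normal_face:
  "aff_dim {x \<in> PT (3 * m + 4). facet_normal \<bullet> x = 0} \<ge> 4"
proof -
  \<comment> \<open>Runs around a 3-cycle of letters (total weight 0) followed by different short tails.\<close>
  define W where "W = {cycle_word 1 3 2 m [3,2,1], cycle_word 2 1 3 m [1,3,1],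
    cycle_word 1 3 2 m [3,2,3], cycle_word 1 3 2 m [2,1,3], cycle_word 1 3 2 m [3,1,3]}"
  have W: "W \<subseteq> Omega (3 * m + 4)"
    unfolding W_def by (auto intro!: cycle_word_in_Omega simp: admissible_def)
  have avec_W:
    "avec (cycle_word 1 3 2 m [3,2,1]) = vector [0, real m + 1, real m + 1, 0, 0, real m + 1]"
    "avec (cycle_word 2 1 3 m [1,3,1]) = vector [0, real m + 1, real m + 1, 0, 1, real m]"
    "avec (cycle_word 1 3 2 m [3,2,3]) = vector [0, real m + 1, real m, 1, 0, real m + 1]"
    "avec (cycle_word 1 3 2 m [2,1,3]) = vector [1, real m + 1, real m + 1, 0, 0, real m]"
    "avec (cycle_word 1 3 2 m [3,1,3]) = vector [0, real m + 2, real m, 0, 1, real m]"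
    by (simp_all add: avec_cycle_word avec_Cons_Cons unit_pair_def vec6_eq_iff)
  have tight: "facet_normal \<bullet> avec w = 0" if "w \<in> W" for w
  proof -
    have "avec w \<in> {vector [0, real m + 1, real m + 1, 0, 0, real m + 1],
      vector [0, real m + 1, real m + 1, 0, 1, real m], vector [0, real m + 1, real m, 1, 0, real m + 1],
      vector [1, real m + 1, real m + 1, 0, 0, real m], vector [0, real m + 2, real m, 0, 1, real m]}"
      using that unfolding W_def avec_W[symmetric] by blast
    then show ?thesis by (auto simp: inner_vec6 facet_normal_def)
  qed
  have "avec ` W \<subseteq> {x \<in> PT (3 * m + 4). facet_normal \<bullet> x = 0}"
    unfolding image_subset_iff PT_def using W tight by (blast intro: hull_inc)
  moreover have "aff_dim (avec ` W) \<ge> 4"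
    unfolding W_def image_insert image_empty avec_W
    by (rule aff_dim_ge_4_triangular[where i = 5 and j = 4 and k = 1 and l = 2]) simp_all
  ultimately show ?thesis
    using aff_dim_subset order_trans by blast
qed

lemma facet_normal_not_zero_on_PT: "\<exists>p \<in> PT (3 * m + 4). facet_normal \<bullet> p \<noteq> 0"
proof
  let ?w = "cycle_word 3 2 1 m [1,3,2]"
  have "?w \<in> Omega (3 * m + 4)"
    by (auto intro!: cycle_word_in_Omega simp: admissible_def)
  then show "avec ?w \<in> PT (3 * m + 4)"
    unfolding PT_def by (blast intro: hull_inc)
  have "avec ?w = vector [0, real m + 1, real m, 0, 1, real m + 1]"
    by (simp add: avec_cycle_word avec_Cons_Cons unit_pair_def vec6_eq_iff)
  then show "facet_normal \<bullet> avec ?w \<noteq> 0"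
    by (simp add: inner_vec6 facet_normal_def)
qed

lemma defines_facet_facet_normal:
  assumes "1 \<le> k"
  shows "defines_facet facet_normal (3 * k + 1)"
proof -
  define m where "m = k - 1"
  have T: "3 * k + 1 = 3 * m + 4" using assms by (simp add: m_def)
  have nonneg: "facet_normal \<bullet> avec w \<ge> 0" if "w \<in> Omega (3 * k + 1)" for w
    using that walk_sum_facet_normal_nonneg by (simp add: Omega_iff inner_avec_eq_walk_sum)
  then have "PT (3 * k + 1) \<subseteq> {x. facet_normal \<bullet> x \<ge> 0}"
    unfolding PT_def by (intro hull_minimal) (auto simp: convex_halfspace_ge)
  moreover obtain p where "p \<in> PT (3 * k + 1)" "facet_normal \<bullet> p \<noteq> 0"
    using facet_normal_not_zero_on_PT[of m] unfolding T by blast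
  moreover have "convex (PT (3 * k + 1))" by (simp add: PT_def)
  ultimately have "{x \<in> PT (3 * k + 1). facet_normal \<bullet> x = 0} facet_of PT (3 * k + 1)"
    using aff_dim_PT_le[of "3 * k + 1"] aff_dim_facet_normal_face[of m] unfolding T
    by (intro facet_of_supporting_hyperplane[where d = 4]) auto
  with nonneg show ?thesis
    unfolding defines_facet_def by blast
qed

theorem proposition8:
  fixes k :: nat and \<sigma> :: "nat \<Rightarrow> nat"
  assumes "k \<ge> 2" and "\<sigma> permutes {1, 2, 3}"
  shows "defines_facet (perm_act \<sigma> (vector [2, -1, -1, -1, 2, 2])) (3 * k + 1)"
  using defines_facet_perm_act[OF assms(2) defines_facet_facet_normal] assms(1)
  unfolding facet_normal_def by simp

end
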